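(* Let $\mathcal{X}\subset\mathbb{R}^d$ be nonempty, closed, convex and compact with diameter $D:=\max_{x,y\in\mathcal{X}}\|x-y\|$. Let $\Phi:\mathcal{X}\to\mathbb{R}$ be differentiable with $L$-Lipschitz gradient, and set $G:=\max_{x\in\mathcal{X}}\|\nabla\Phi(x)\|$, $\Phi_{\max}:=\max_{\mathcal{X}}\Phi$, $\Phi_{\min}:=\min_{\mathcal{X}}\Phi$. Let $F:\mathcal{X}\to\mathbb{R}^d$ satisfy $F(x)=-\nabla\Phi(x)+R(x)$ with $\|R(x)\|\le\varepsilon$ for all $x\in\mathcal{X}$. Run $x_{t+1}=\operatorname{Proj}_{\mathcal{X}}(x_t+\eta g_t)$, $t=0,\dots,T-1$, from $x_0\in\mathcal{X}$ with $0<\eta\le 1/L$, where the directions $g_t\in\mathbb{R}^d$ satisfy $\|g_t-\nabla\Phi(x_t)\|\le\delta_t\le\bar\delta$ for all $t$. Let $\widetilde{\mathcal{G}}_\eta(x_t):=\frac1\eta(x_{t+1}-x_t)$, pick $\hat t\in\arg\min_{0\le t\le T-1}\|\widetilde{\mathcal{G}}_\eta(x_t)\|$ and set $\hat x_T:=x_{\hat t}$. Then $$\operatorname{Gap}(\hat x_T)\le \bigl(D+\eta(G+\bar\delta)\bigr)\sqrt{\frac{4(\Phi_{\max}-\Phi_{\min})}{T\eta}+4\bar\delta^2}+D(\varepsilon+\bar\delta).$$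
   Context: For $\bar x\in\mathcal{X}$, the duality gap of $F$ is $\operatorname{Gap}(\bar x):=\max_{x\in\mathcal{X}}\langle F(\bar x),\bar x-x\rangle$ with the Euclidean inner product. $\operatorname{Proj}_{\mathcal{X}}$ is Euclidean projection onto $\mathcal{X}$. *)

theory Defs
  imports "HOL-Analysis.Analysis"
begin

definition gap :: "'a::euclidean_space set \<Rightarrow> ('a \<Rightarrow> 'a) \<Rightarrow> 'a \<Rightarrow> real" where
  "gap X F xb = (SUP x\<in>X. F xb \<bullet> (xb - x))"

end

theory Submission
  imports Defs
begin

text \<open>
  With step size \<open>\<eta> \<le> 1/L\<close>, each inexact projected gradient step increases \<open>\<Phi>\<close> by at least
  \<open>\<parallel>x\<^sub>t\<^sub>+\<^sub>1 - x\<^sub>t\<parallel>\<^sup>2/(4\<eta>) - \<eta>\<delta>\<^sup>2\<close>. Summing over \<open>T\<close> steps, the total increase is at most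
  \<open>\<Phi>\<^sub>m\<^sub>a\<^sub>x - \<Phi>\<^sub>m\<^sub>i\<^sub>n\<close>, so the shortest step (the selected iterate) has gradient mapping norm at most
  the square root in the bound. On the other hand, the variational inequality of the projection
  bounds \<open>\<langle>\<nabla>\<Phi>(x), z - x\<rangle>\<close> for every \<open>z \<in> X\<close> by the length of the step, the gradient error
  and the diameter; the residual \<open>R\<close> contributes \<open>D\<epsilon>\<close>.
\<close>

lemma quadratic_lower_bound_of_lipschitz_gradient:
  fixes X :: "'a::euclidean_space set" and Phi :: "'a \<Rightarrow> real" and gradPhi :: "'a \<Rightarrow> 'a"
  assumes "convex X" and a: "a \<in> X" and b: "b \<in> X"
    and der: "\<And>y. y \<in> X \<Longrightarrow> (Phi has_derivative (\<lambda>h. gradPhi y \<bullet> h)) (at y within X)"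
    and lip: "\<And>y z. y \<in> X \<Longrightarrow> z \<in> X \<Longrightarrow> norm (gradPhi y - gradPhi z) \<le> L * norm (y - z)"
  shows "Phi b \<ge> Phi a + gradPhi a \<bullet> (b - a) - L / 2 * (norm (b - a))\<^sup>2"
proof -
  define p where "p s = a + s *\<^sub>R (b - a)" for s :: real
  have pX: "p s \<in> X" if "s \<in> {0..1}" for s
  proof -
    have "p s = (1 - s) *\<^sub>R a + s *\<^sub>R b" unfolding p_def by (simp add: algebra_simps)
    then show ?thesis using that \<open>convex X\<close> a b by (auto intro: convexD_alt)
  qed
  \<comment> \<open>The claim is \<open>h 0 \<le> h 1\<close>; the Lipschitz bound makes \<open>h'\<close> nonnegative.\<close>
  define h where "h s = Phi (p s) - s * (gradPhi a \<bullet> (b - a)) + L / 2 * s\<^sup>2 * (norm (b - a))\<^sup>2"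
    for s
  define h' where "h' s = (\<lambda>u. u * (gradPhi (p s) \<bullet> (b - a)) - u * (gradPhi a \<bullet> (b - a))
      + L * s * u * (norm (b - a))\<^sup>2)" for s :: real
  have h_deriv: "(h has_derivative h' s) (at s within {0..1})" if s: "s \<in> {0..1}" for s
  proof -
    have p_deriv: "(p has_derivative (\<lambda>u. u *\<^sub>R (b - a))) (at s within {0..1})"
      unfolding p_def by (auto intro!: derivative_eq_intros)
    have "(Phi has_derivative (\<lambda>h. gradPhi (p s) \<bullet> h)) (at (p s) within p ` {0..1})"
      by (rule has_derivative_subset[OF der]) (use pX s in auto)
    from diff_chain_within[OF p_deriv this]
    have Phi_p_deriv: "((\<lambda>s. Phi (p s)) has_derivative (\<lambda>u. u * (gradPhi (p s) \<bullet> (b - a))))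
        (at s within {0..1})"
      by (simp add: o_def)
    show ?thesis unfolding h_def h'_def
      by (rule Phi_p_deriv derivative_eq_intros refl | simp)+ (simp add: algebra_simps)
  qed
  obtain s where s: "s \<in> {0..1}" and mvt: "h 1 - h 0 = h' s 1"
    using mvt_very_simple[of 0 1 h h'] h_deriv by auto
  have "norm (gradPhi (p s) - gradPhi a) \<le> L * norm (p s - a)" using lip pX s a by blast
  also have "norm (p s - a) = s * norm (b - a)" unfolding p_def using s by simp
  finally have "norm (gradPhi (p s) - gradPhi a) \<le> L * (s * norm (b - a))" .
  then have "- ((gradPhi (p s) - gradPhi a) \<bullet> (b - a)) \<le> L * (s * norm (b - a)) * norm (b - a)"
    by (metis Cauchy_Schwarz_ineq2 abs_le_D2 mult_right_mono norm_ge_zero order_trans)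
  then have "0 \<le> h' s 1"
    unfolding h'_def by (simp add: inner_diff_left power2_eq_square algebra_simps)
  with mvt show ?thesis unfolding h_def p_def by simp
qed

lemma projected_step_ascent:
  fixes X :: "'a::euclidean_space set" and Phi :: "'a \<Rightarrow> real" and gradPhi :: "'a \<Rightarrow> 'a"
  assumes "convex X" "closed X" and y: "y \<in> X"
    and der: "\<And>y. y \<in> X \<Longrightarrow> (Phi has_derivative (\<lambda>h. gradPhi y \<bullet> h)) (at y within X)"
    and lip: "\<And>y z. y \<in> X \<Longrightarrow> z \<in> X \<Longrightarrow> norm (gradPhi y - gradPhi z) \<le> L * norm (y - z)"
    and eta: "0 < eta" "L * eta \<le> 1"
    and v: "norm (v - gradPhi y) \<le> delta"
    and y': "y' = closest_point X (y + eta *\<^sub>R v)"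
  shows "Phi y' - Phi y \<ge> (norm (y' - y))\<^sup>2 / (4 * eta) - eta * delta\<^sup>2"
proof -
  define d where "d = y' - y"
  define m where "m = norm d"
  have y'X: "y' \<in> X" using y' closest_point_in_set[OF \<open>closed X\<close>] y by blast
  have "(y + eta *\<^sub>R v - y') \<bullet> (y - y') \<le> 0"
    using closest_point_dot[OF \<open>convex X\<close> \<open>closed X\<close> y] y' by simp
  then have proj: "m\<^sup>2 \<le> eta * (v \<bullet> d)"
    unfolding m_def d_def
    by (simp add: power2_norm_eq_inner algebra_simps inner_diff_left inner_diff_right inner_commute)
  have "(v - gradPhi y) \<bullet> d \<le> delta * m"
    unfolding m_def by (metis norm_cauchy_schwarz v mult_right_mono norm_ge_zero order_trans)
  moreover have "Phi y' \<ge> Phi y + gradPhi y \<bullet> d - L / 2 * m\<^sup>2"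
    unfolding d_def m_def by (rule quadratic_lower_bound_of_lipschitz_gradient[OF \<open>convex X\<close> y y'X der lip])
  ultimately have "Phi y' - Phi y \<ge> v \<bullet> d - delta * m - L / 2 * m\<^sup>2"
    by (simp add: inner_diff_left)
  then have "eta * (Phi y' - Phi y) \<ge> eta * (v \<bullet> d) - eta * delta * m - L * eta / 2 * m\<^sup>2"
    using mult_left_mono[OF _ less_imp_le[OF eta(1)]] by (fastforce simp: algebra_simps)
  moreover have "L * eta / 2 * m\<^sup>2 \<le> m\<^sup>2 / 2"
    using mult_right_mono[OF eta(2), of "m\<^sup>2"] by simp
  moreover have "0 \<le> (m / 2 - eta * delta)\<^sup>2" by simp
  ultimately have "eta * (Phi y' - Phi y) \<ge> m\<^sup>2 / 4 - eta\<^sup>2 * delta\<^sup>2"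
    using proj by (simp add: power2_diff power_mult_distrib field_simps)
  with eta(1) show ?thesis
    unfolding m_def d_def by (simp add: field_simps power2_eq_square)
qed

lemma inner_le_of_closest_point_step:
  fixes X :: "'a::euclidean_space set"
  assumes "convex X" "closed X" and z: "z \<in> X"
    and y': "y' = closest_point X (y + eta *\<^sub>R v)"
    and eta: "0 < eta" and v: "norm (v - w) \<le> delta"
  shows "w \<bullet> (z - y) \<le> (norm (y' - y) / eta + delta) * norm (z - y') + norm w * norm (y' - y)"
proof -
  have "(y + eta *\<^sub>R v - y') \<bullet> (z - y') \<le> 0"
    using closest_point_dot[OF \<open>convex X\<close> \<open>closed X\<close> z] y' by simp
  then have "eta * (v \<bullet> (z - y')) \<le> (y' - y) \<bullet> (z - y')"
    by (simp add: algebra_simps inner_diff_left)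
  also have "\<dots> \<le> norm (y' - y) * norm (z - y')" by (rule norm_cauchy_schwarz)
  finally have "v \<bullet> (z - y') \<le> norm (y' - y) / eta * norm (z - y')"
    using eta by (simp add: field_simps)
  moreover have "(w - v) \<bullet> (z - y') \<le> delta * norm (z - y')"
    by (metis norm_cauchy_schwarz norm_minus_commute v mult_right_mono norm_ge_zero order_trans)
  moreover have "w \<bullet> (y' - y) \<le> norm w * norm (y' - y)" by (rule norm_cauchy_schwarz)
  moreover have "w \<bullet> (z - y) = v \<bullet> (z - y') + (w - v) \<bullet> (z - y') + w \<bullet> (y' - y)"
    by (simp add: inner_diff_left inner_diff_right)
  ultimately show ?thesis by (simp add: distrib_right)
qed

lemma gap_le_of_closest_point_step:
  fixes X :: "'a::euclidean_space set" and F R :: "'a \<Rightarrow> 'a"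
  assumes "convex X" "closed X" "bounded X" and y: "y \<in> X"
    and F: "F y = - w + R y" and R: "norm (R y) \<le> eps" and w: "norm w \<le> G"
    and y': "y' = closest_point X (y + eta *\<^sub>R v)" and step: "norm (y' - y) / eta \<le> S"
    and eta: "0 < eta" and v: "norm (v - w) \<le> delta"
  shows "gap X F y \<le> (diameter X + eta * (G + delta)) * S + diameter X * (eps + delta)"
proof -
  have diam: "norm (a - b) \<le> diameter X" if "a \<in> X" "b \<in> X" for a b
    using diameter_bounded_bound[OF \<open>bounded X\<close> that] by (simp add: dist_norm)
  have y'X: "y' \<in> X" using y' closest_point_in_set[OF \<open>closed X\<close>] y by blast
  have "0 \<le> delta" using v norm_ge_zero order_trans by blast
  have "0 \<le> G" using w norm_ge_zero order_trans by blast
  have "0 \<le> S" using step eta by (meson divide_nonneg_pos norm_ge_zero order_trans)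
  show ?thesis
    unfolding gap_def
  proof (rule cSUP_least)
    fix z assume z: "z \<in> X"
    have "F y \<bullet> (y - z) = w \<bullet> (z - y) + R y \<bullet> (y - z)"
      unfolding F by (simp add: inner_diff_right inner_diff_left)
    also have "R y \<bullet> (y - z) \<le> eps * diameter X"
      by (metis norm_cauchy_schwarz R diam[OF y z] mult_mono' norm_ge_zero order_trans)
    also have "w \<bullet> (z - y) \<le> (norm (y' - y) / eta + delta) * norm (z - y') + norm w * norm (y' - y)"
      by (rule inner_le_of_closest_point_step[OF \<open>convex X\<close> \<open>closed X\<close> z y' eta v])
    \<comment> \<open>Using \<open>G + delta\<close> instead of \<open>G\<close> is slack; it gives the bound in the stated form.\<close>
    also have "\<dots> \<le> (S + delta) * diameter X + (G + delta) * (eta * S)"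
    proof (rule add_mono)
      show "(norm (y' - y) / eta + delta) * norm (z - y') \<le> (S + delta) * diameter X"
        using step diam[OF z y'X] \<open>0 \<le> S\<close> \<open>0 \<le> delta\<close> by (intro mult_mono) auto
      show "norm w * norm (y' - y) \<le> (G + delta) * (eta * S)"
        using w step eta \<open>0 \<le> G\<close> \<open>0 \<le> delta\<close> by (intro mult_mono) (auto simp: field_simps)
    qed
    finally show "F y \<bullet> (y - z) \<le> (diameter X + eta * (G + delta)) * S + diameter X * (eps + delta)"
      by (simp add: algebra_simps)
  qed (use y in blast)
qed

lemma min_step_le_of_ascent:
  fixes a s :: "nat \<Rightarrow> real"
  assumes ascent: "\<And>t. t < T \<Longrightarrow> a (Suc t) - a t \<ge> (s t)\<^sup>2 / (4 * eta) - eta * delta\<^sup>2"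
    and min: "\<And>t. t < T \<Longrightarrow> s th \<le> s t" and "th < T" "0 \<le> s th"
    and range: "a T - a 0 \<le> Delta" and eta: "0 < eta"
  shows "s th / eta \<le> sqrt (4 * Delta / (real T * eta) + 4 * delta\<^sup>2)"
proof -
  have "(\<Sum>t<T. (s th)\<^sup>2 / (4 * eta) - eta * delta\<^sup>2) \<le> (\<Sum>t<T. a (Suc t) - a t)"
  proof (rule sum_mono)
    fix t assume "t \<in> {..<T}"
    then have "(s th)\<^sup>2 \<le> (s t)\<^sup>2" using min \<open>0 \<le> s th\<close> by (simp add: power_mono)
    then have "(s th)\<^sup>2 / (4 * eta) \<le> (s t)\<^sup>2 / (4 * eta)"
      using eta by (simp add: divide_right_mono)
    then show "(s th)\<^sup>2 / (4 * eta) - eta * delta\<^sup>2 \<le> a (Suc t) - a t"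
      using ascent[of t] \<open>t \<in> {..<T}\<close> by simp
  qed
  also have "\<dots> = a T - a 0" by (rule sum_lessThan_telescope)
  finally have "real T * ((s th)\<^sup>2 / (4 * eta) - eta * delta\<^sup>2) \<le> Delta" using range by simp
  with \<open>th < T\<close> eta have "(s th / eta)\<^sup>2 \<le> 4 * Delta / (real T * eta) + 4 * delta\<^sup>2"
    by (simp add: field_simps power2_eq_square)
  then show ?thesis by (rule real_le_rsqrt)
qed

theorem theorem6p8:
  fixes X :: "'a::euclidean_space set"
    and Phi :: "'a \<Rightarrow> real" and gradPhi :: "'a \<Rightarrow> 'a"
    and F R :: "'a \<Rightarrow> 'a"
    and x g :: "nat \<Rightarrow> 'a" and delta :: "nat \<Rightarrow> real"
    and L eta eps deltabar :: real and T th :: nat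
  assumes X_ne: "X \<noteq> {}" and X_closed: "closed X" and X_convex: "convex X"
    and X_compact: "compact X"
    and Phi_diff: "\<And>y. y \<in> X \<Longrightarrow> (Phi has_derivative (\<lambda>h. gradPhi y \<bullet> h)) (at y within X)"
    and grad_lip: "\<And>y z. y \<in> X \<Longrightarrow> z \<in> X \<Longrightarrow> norm (gradPhi y - gradPhi z) \<le> L * norm (y - z)"
    and F_def: "\<And>y. y \<in> X \<Longrightarrow> F y = - gradPhi y + R y"
    and R_bound: "\<And>y. y \<in> X \<Longrightarrow> norm (R y) \<le> eps"
    and x0: "x 0 \<in> X"
    and step: "\<And>t. t < T \<Longrightarrow> x (Suc t) = closest_point X (x t + eta *\<^sub>R g t)"
    and eta_pos: "0 < eta" and eta_le: "eta \<le> 1 / L"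
    and g_err: "\<And>t. t < T \<Longrightarrow> norm (g t - gradPhi (x t)) \<le> delta t"
    and delta_le: "\<And>t. t < T \<Longrightarrow> delta t \<le> deltabar"
    and th_lt: "th < T"
    and th_min: "\<And>t. t < T \<Longrightarrow>
        norm ((1 / eta) *\<^sub>R (x (Suc th) - x th)) \<le> norm ((1 / eta) *\<^sub>R (x (Suc t) - x t))"
  shows "gap X F (x th) \<le>
    (diameter X + eta * ((SUP y\<in>X. norm (gradPhi y)) + deltabar)) *
      sqrt (4 * ((SUP y\<in>X. Phi y) - (INF y\<in>X. Phi y)) / (real T * eta) + 4 * deltabar\<^sup>2)
    + diameter X * (eps + deltabar)"
proof -
  have "0 < L" using eta_pos eta_le divide_nonneg_nonpos[of 1 L] by fastforce
  then have eta_L: "L * eta \<le> 1" using eta_le by (simp add: field_simps)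
  have xX: "x t \<in> X" if "t \<le> T" for t
    using that
  proof (induction t)
    case (Suc t)
    then show ?case using step[of t] closest_point_in_set[OF X_closed X_ne] by simp
  qed (use x0 in simp)
  have g_err': "norm (g t - gradPhi (x t)) \<le> deltabar" if "t < T" for t
    using g_err[OF that] delta_le[OF that] by linarith
  have "compact (gradPhi ` X)"
    using grad_lip \<open>0 < L\<close>
    by (intro compact_continuous_image[OF lipschitz_on_continuous_on X_compact] lipschitz_onI)
      (auto simp: dist_norm)
  then have grad_le: "norm (gradPhi y) \<le> (SUP y\<in>X. norm (gradPhi y))" if "y \<in> X" for y
    using that by (intro cSUP_upper bounded_imp_bdd_above) (simp_all add: bounded_norm_comp compact_imp_bounded)
  have "continuous_on X Phi"
    using Phi_diff has_derivative_continuous continuous_on_eq_continuous_within by blast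
  then have "bounded (Phi ` X)"
    using compact_continuous_image X_compact compact_imp_bounded by blast
  then have "Phi (x T) - Phi (x 0) \<le> (SUP y\<in>X. Phi y) - (INF y\<in>X. Phi y)"
    using xX[of T] x0
    by (intro diff_mono cSUP_upper cINF_lower bounded_imp_bdd_above bounded_imp_bdd_below) auto
  then have "norm (x (Suc th) - x th) / eta
      \<le> sqrt (4 * ((SUP y\<in>X. Phi y) - (INF y\<in>X. Phi y)) / (real T * eta) + 4 * deltabar\<^sup>2)"
    using projected_step_ascent[OF X_convex X_closed xX Phi_diff grad_lip eta_pos eta_L g_err' step]
      th_min th_lt eta_pos
    by (intro min_step_le_of_ascent[where a = "\<lambda>t. Phi (x t)" and s = "\<lambda>t. norm (x (Suc t) - x t)"])
      (auto simp: divide_le_cancel)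
  then show ?thesis
    using th_lt xX[of th] grad_le
    by (intro gap_le_of_closest_point_step[OF X_convex X_closed compact_imp_bounded[OF X_compact]
          xX F_def R_bound _ step _ eta_pos]) (auto simp: g_err' norm_minus_commute)
qed

end
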